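(* If $\Gamma;\Sigma;\theta\vdash_{pc}e:\tau$ is derivable in the type system of $\lambda$-WHR, $\theta'$ is a state environment with $\theta'\sqsupseteq\theta$, $m\in\mathbb{N}$, and $\delta$ is a substitution with $(\delta,\theta',m)\in\mathcal{V}[\![\Gamma]\!]$, then $(\delta(e),\theta',m)\in\mathcal{E}^{pc}[\![\tau]\!]$.
   Context: **Policies.** Fix a set of actors $a$ and a set of locks $\sigma$. A lock set $\Sigma$ is a set of locks. A clause is a pair $(\Sigma \Rightarrow a)$; a policy $p$ is a set of clauses. $p \sqsubseteq q$ iff for every $(\Sigma_2\Rightarrow a)\in q$ there is $(\Sigma_1\Rightarrow a)\in p$ with $\Sigma_1\subseteq\Sigma_2$. $\bot=\{(\emptyset\Rightarrow a)\mid a \text{ an actor}\}$. $p\sqcup q=\{(\Sigma_1\cup\Sigma_2\Rightarrow a)\mid (\Sigma_1\Rightarrow a)\in p,(\Sigma_2\Rightarrow a)\in q\}$. Specialization: $p|_\Sigma=\{(\Sigma_1\setminus\Sigma\Rightarrow a)\mid(\Sigma_1\Rightarrow a)\in p\}$. A fixed function $\mathrm{LockPolicy}$ assigns a policy to each lock. **Types.** Raw types $A ::= \mathsf{unit}\mid\mathsf{nat}\mid \tau_1+\tau_2\mid\tau_1\times\tau_2\mid \mathsf{ref}\,\tau\mid \tau_1\xrightarrow{\Sigma,p}\tau_2$; labeled types $\tau ::= A^p$. For $\tau=A^p$: $\tau\sqsubseteq q$ means $p\sqsubseteq q$; $q\sqsubseteq\tau$ means $q\sqsubseteq p$; $\tau|_\Sigma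 = A^{p|_\Sigma}$. **Syntax.** Expressions: $x\mid ()\mid n\ (n\in\mathbb{N})\mid \lambda x.e\mid (e,e')\mid \mathsf{fst}(e)\mid\mathsf{snd}(e)\mid\mathsf{inl}(e)\mid\mathsf{inr}(e)\mid \mathsf{case}\ e\ \mathsf{of}\ \mathsf{inl}\,x\Rightarrow e'\mid\mathsf{inr}\,y\Rightarrow e''\mid e\,e'\mid \mathsf{new}(e,\tau)\mid\ !e\mid e:=e'\mid \mathsf{open}\ \sigma\ \mathsf{in}\ e\mid\mathsf{opened}\ \sigma\ \mathsf{in}\ e\mid\mathsf{close}\ \sigma\ \mathsf{in}\ e\mid\mathsf{closed}\ \sigma\ \mathsf{in}\ e\mid \mathsf{when}\ \sigma\ \mathsf{then}\ e\ \mathsf{else}\ e'\mid l$ ($l$ ranging over a countably infinite set of locations). Values: $v::=\lambda x.e\mid(v,v')\mid\mathsf{inl}(v)\mid\mathsf{inr}(v)\mid()\mid l\mid n$; $\mathcal{V}$ is the set of values. $[v/x]e$ is substitution; for a map $\delta$ from variables to values, $\delta(e)$ substitutes simultaneously. A state $S$ is a finite map from locations to pairs $(v,\tau)$; write $S(l)=v$, $\mathrm{type}(S,l)=\tau$. A state environment $\theta$ is a finite map from locations to labeled types; $\theta'\sqsupseteq\theta$ iff $\theta\subseteq\theta'$ as graphs. **Observations.** $\omega::=\varepsilon\mid \mathsf{wr}_{l,\tau}(v)\mid\mathsf{open}(\sigma)\mid\mathsf{close}(\sigma)\mid\mathsf{unopen}(\sigma)\mid\mathsf{unclose}(\sigma)$.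 $\mathrm{pol}(\mathsf{wr}_{l,A^p}(v))=p$; the policy of each of the four lock observations on $\sigma$ is $\mathrm{LockPolicy}(\sigma)$; $\mathrm{pol}(\varepsilon)$ is undefined. **Reduction** $e,\Sigma,S\to e',S',\omega,\Sigma'$ ($\Sigma$ = open locks, $\Sigma'$ = active lock set). Congruence rules (the premise step's $S',\omega,\Sigma'$ are propagated unchanged): reduce $e$ inside $\mathsf{new}(e,\tau)$, $!e$, $e:=e'$, $l:=e$, $e\,e'$, $(\lambda x.e)\,e$, $(e,e')$, $(v,e)$, $\mathsf{fst}(e)$, $\mathsf{snd}(e)$, $\mathsf{inl}(e)$, $\mathsf{inr}(e)$, and the scrutinee of $\mathsf{case}$, all with the same open-lock set $\Sigma$. Lock rules: $\mathsf{open}\ \sigma\ \mathsf{in}\ e,\Sigma,S\to \mathsf{opened}\ \sigma\ \mathsf{in}\ e,S,\mathsf{open}(\sigma),\Sigma$; if $e,\Sigma\cup\{\sigma\},S\to e',S',\omega,\Sigma'$ then $\mathsf{opened}\ \sigma\ \mathsf{in}\ e,\Sigma,S\to\mathsf{opened}\ \sigma\ \mathsf{in}\ e',S',\omega,\Sigma'$; $\mathsf{opened}\ \sigma\ \mathsf{in}\ v,\Sigma,S\to v,S,\mathsf{unopen}(\sigma),\Sigma$; analogously for $\mathsf{close}/\mathsf{closed}$ with $\Sigma\setminus\{\sigma\}$ and observations $\mathsf{close}(\sigma)$, $\mathsf{unclose}(\sigma)$. If $\sigma\in\Sigma$ and $e,\Sigma,S\to e'',S',\omega,\Sigma'$ then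 $\mathsf{when}\ \sigma\ \mathsf{then}\ e\ \mathsf{else}\ e',\Sigma,S\to\mathsf{when}\ \sigma\ \mathsf{then}\ e''\ \mathsf{else}\ e',S',\omega,\Sigma'$; if $\sigma\notin\Sigma$ and $e',\Sigma,S\to e'',S',\omega,\Sigma'$ then it steps to $\mathsf{when}\ \sigma\ \mathsf{then}\ e\ \mathsf{else}\ e''$; if $\sigma\in\Sigma$, $\mathsf{when}\ \sigma\ \mathsf{then}\ v\ \mathsf{else}\ e'\to v$; if $\sigma\notin\Sigma$, $\mathsf{when}\ \sigma\ \mathsf{then}\ e\ \mathsf{else}\ v\to v$ (both with $S$ unchanged, $\varepsilon$, active set $\Sigma$). Base rules (state unchanged unless stated, active set $\Sigma$): $!l\to v$ with $\varepsilon$ if $S(l)=v$; $\mathsf{new}(v,\tau),\Sigma,S\to l,S\cup\{l\mapsto(v,\tau)\},\mathsf{wr}_{l,\tau}(v),\Sigma$ for any $l\notin\mathrm{dom}(S)$; $l:=v,\Sigma,S\to (),S[l\mapsto(v,\tau)],\mathsf{wr}_{l,\tau}(v),\Sigma$ if $l\in\mathrm{dom}(S)$, $\mathrm{type}(S,l)=\tau$; $(\lambda x.e)\,v\to[v/x]e$, $\mathsf{fst}(v,v')\to v$, $\mathsf{snd}(v,v')\to v'$, $\mathsf{case}\ \mathsf{inl}(v)\ldots\to[v/x]e'$, $\mathsf{case}\ \mathsf{inr}(v)\ldots\to[v/y]e''$, all with $\varepsilon$. **Subtyping** $<:$: $A^p<:B^{p'}$ if $p\sqsubseteq p'$ and $A<:B$;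 $\mathsf{unit}<:\mathsf{unit}$; $\mathsf{nat}<:\mathsf{nat}$; $\mathsf{ref}\,\tau<:\mathsf{ref}\,\tau$; $\tau_0\times\tau_2<:\tau_1\times\tau_3$ and $\tau_0+\tau_2<:\tau_1+\tau_3$ if $\tau_0<:\tau_1,\tau_2<:\tau_3$; $\tau_1\xrightarrow{\Sigma,p}\tau_2<:\tau_0\xrightarrow{\Sigma',p'}\tau_3$ if $\tau_0<:\tau_1$, $\tau_2<:\tau_3$, $p'\sqsubseteq p$, $\Sigma\subseteq\Sigma'$. **Typing** $\Gamma;\Sigma;\theta\vdash_{pc}e:\tau$: var: $x:\tau$ if $x:\tau\in\Gamma$; $():\mathsf{unit}^\bot$; $n:\mathsf{nat}^\bot$; $l:(\mathsf{ref}\,\theta(l))^\bot$; $\lambda$: from $\Gamma,x:\tau_1;\Sigma';\theta\vdash_{pc'}e:\tau_2$ infer $\Gamma;\Sigma;\theta\vdash_{pc}\lambda x.e:(\tau_1\xrightarrow{\Sigma',pc'}\tau_2)^\bot$; open/opened: from $\Gamma;\Sigma\cup\{\sigma\};\theta\vdash_{pc}e:\tau$ and $pc\sqsubseteq\mathrm{LockPolicy}(\sigma)$ infer $\mathsf{open}\ \sigma\ \mathsf{in}\ e:\tau$ and $\mathsf{opened}\ \sigma\ \mathsf{in}\ e:\tau$ under $\Gamma;\Sigma;\theta\vdash_{pc}$; close/closed likewise with $\Sigma\setminus\{\sigma\}$; pair: $e_i:\tau_i$ gives $(e_1,e_2):(\tau_1\times\tau_2)^\bot$; fst/snd: $e:(\tau_1\times\tau_2)^p$,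 $p\sqsubseteq\tau_i$ gives $\mathsf{fst}(e):\tau_1$, resp. $\mathsf{snd}(e):\tau_2$; $e:\tau_1$ gives $\mathsf{inl}(e):(\tau_1+\tau_2)^\bot$, $e:\tau_2$ gives $\mathsf{inr}(e):(\tau_1+\tau_2)^\bot$; case: $e:(\tau_1+\tau_2)^p$, $p\sqsubseteq\tau$, $\Gamma,x:\tau_1;\Sigma;\theta\vdash_{pc\sqcup p}e_1:\tau$, $\Gamma,y:\tau_2;\Sigma;\theta\vdash_{pc\sqcup p}e_2:\tau$ give $\mathsf{case}\ e\ \mathsf{of}\ \mathsf{inl}\,x\Rightarrow e_1\mid\mathsf{inr}\,y\Rightarrow e_2:\tau$; sub: from $\Gamma;\Sigma;\theta\vdash_{pc'}e:\tau'$, $pc\sqsubseteq pc'$, $\tau'<:\tau$ infer $\Gamma;\Sigma;\theta\vdash_{pc}e:\tau$; app: $e_1:(\tau_1\xrightarrow{\Sigma',pc'}\tau_2)^p$, $e_2:\tau_1'$, $p\sqsubseteq\tau_2$, $pc\sqcup p\sqsubseteq pc'$, $\tau_1'<:\tau_1$, $\Sigma'\subseteq\Sigma$ give $e_1\,e_2:\tau_2$; deref: $e:(\mathsf{ref}\,\tau)^p$, $p\sqsubseteq\tau'$, $\tau<:\tau'$ give $!e:\tau'$; new: $e:\tau'$, $pc\sqsubseteq\tau$, $\tau'|_\Sigma<:\tau$ give $\mathsf{new}(e,\tau):(\mathsf{ref}\,\tau)^\bot$; assign: $e:(\mathsf{ref}\,\tau')^p$, $e':\tau$, $\tau|_\Sigma<:\tau'$,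 $pc\sqcup p\sqsubseteq\tau'$ give $e:=e':\mathsf{unit}^\bot$; when: $\Gamma;\Sigma\cup\{\sigma\};\theta\vdash_{pc\sqcup\mathrm{LockPolicy}(\sigma)}e_1:\tau$, $\Gamma;\Sigma;\theta\vdash_{pc\sqcup\mathrm{LockPolicy}(\sigma)}e_2:\tau$, $\mathrm{LockPolicy}(\sigma)\sqsubseteq\tau$ give $\mathsf{when}\ \sigma\ \mathsf{then}\ e_1\ \mathsf{else}\ e_2:\tau$. (All premises without explicit context use $\Gamma;\Sigma;\theta\vdash_{pc}$.) **Unary relation** (sets of triples, defined by well-founded recursion on the step index $m$). $(S,m)\triangleright\theta$ iff $\mathrm{dom}\,\theta\subseteq\mathrm{dom}\,S$ and for all $l\in\mathrm{dom}\,\theta$: $\theta(l)=\mathrm{type}(S,l)$ and $(S(l),\theta,m)\in\mathcal{V}[\![\theta(l)]\!]$. $\mathcal{V}[\![A^p]\!]=\mathcal{V}[\![A]\!]$; $\mathcal{V}[\![\mathsf{unit}]\!]=\{((),\theta,m)\}$; $\mathcal{V}[\![\mathsf{nat}]\!]=\{(n,\theta,m)\mid n\in\mathbb{N}\}$; $\mathcal{V}[\![\tau_1\times\tau_2]\!]=\{((v_1,v_2),\theta,m)\mid (v_i,\theta,m)\in\mathcal{V}[\![\tau_i]\!]\}$; $\mathcal{V}[\![\tau_1+\tau_2]\!]=\{(\mathsf{inl}(v),\theta,m)\mid(v,\theta,m)\in\mathcal{V}[\![\tau_1]\!]\}\cup\{(\mathsf{inr}(v),\theta,m)\mid(v,\theta,m)\in\mathcal{V}[\![\tau_2]\!]\}$;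 $\mathcal{V}[\![\mathsf{ref}\,\tau]\!]=\{(l,\theta,m)\mid\theta(l)=\tau\}$; $(\lambda x.e,\theta,m)\in\mathcal{V}[\![\tau_1\xrightarrow{\Sigma,pc}\tau_2]\!]$ iff for all $\theta'\sqsupseteq\theta$, $m'<m$, $v$ with $(v,\theta',m')\in\mathcal{V}[\![\tau_1]\!]$: $([v/x]e,\theta',m')\in\mathcal{E}^{pc}[\![\tau_2]\!]$. $\mathcal{E}^{pc}[\![\tau]\!]=\mathcal{V}[\![\tau]\!]\cup\{(e,\theta,m)\mid e\notin\mathcal{V}$ and for all $S,\theta'\sqsupseteq\theta,m'<m,e',S',\omega,\Sigma,\Sigma'$ with $(S,m')\triangleright\theta'$ and $e,\Sigma,S\to e',S',\omega,\Sigma'$: ($\omega=\varepsilon$ or $pc\sqsubseteq\mathrm{pol}(\omega)$) and there is $\theta''\sqsupseteq\theta'$ with $(S',m')\triangleright\theta''$ and $(e',\theta'',m')\in\mathcal{E}^{pc}[\![\tau]\!]\}$. Finally $(\delta,\theta,m)\in\mathcal{V}[\![\Gamma]\!]$ iff $\mathrm{dom}\,\Gamma\subseteq\mathrm{dom}\,\delta$ and $(\delta(x),\theta,m)\in\mathcal{V}[\![\Gamma(x)]\!]$ for all $x\in\mathrm{dom}\,\Gamma$. *)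

theory Defs
  imports Main
begin

text \<open>Actors have type 'a, locks have type 's.  A clause (Sigma => a) is the pair (Sigma, a);
  a policy is a set of clauses.\<close>

type_synonym ('a, 's) pol = "('s set \<times> 'a) set"

definition pol_le :: "('a, 's) pol \<Rightarrow> ('a, 's) pol \<Rightarrow> bool" where
  "pol_le p q \<longleftrightarrow> (\<forall>S2 a. (S2, a) \<in> q \<longrightarrow> (\<exists>S1. (S1, a) \<in> p \<and> S1 \<subseteq> S2))"

definition pbot :: "('a, 's) pol" where
  "pbot = {({}, a) | a. True}"

definition pjoin :: "('a, 's) pol \<Rightarrow> ('a, 's) pol \<Rightarrow> ('a, 's) pol" where
  "pjoin p q = {(S1 \<union> S2, a) | S1 S2 a. (S1, a) \<in> p \<and> (S2, a) \<in> q}"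

definition pspec :: "('a, 's) pol \<Rightarrow> 's set \<Rightarrow> ('a, 's) pol" where
  "pspec p L = {(S1 - L, a) | S1 a. (S1, a) \<in> p}"

datatype ('a, 's) raw =
    TUnit
  | TNat
  | TSum "('a, 's) lty" "('a, 's) lty"
  | TProd "('a, 's) lty" "('a, 's) lty"
  | TRef "('a, 's) lty"
  | TFun "('a, 's) lty" "'s set" "('a, 's) pol" "('a, 's) lty"
and ('a, 's) lty = Lab "('a, 's) raw" "('a, 's) pol"

fun lpol :: "('a, 's) lty \<Rightarrow> ('a, 's) pol" where
  "lpol (Lab A p) = p"

fun lspec :: "('a, 's) lty \<Rightarrow> 's set \<Rightarrow> ('a, 's) lty" where
  "lspec (Lab A p) L = Lab A (pspec p L)"

section \<open>Syntax (de Bruijn indices for variables; locations are naturals)\<close>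

datatype ('a, 's) expr =
    Var nat
  | EUnit
  | ENum nat
  | Lam "('a, 's) expr"                      \<comment> \<open>binds index 0\<close>
  | Pair "('a, 's) expr" "('a, 's) expr"
  | Fst "('a, 's) expr"
  | Snd "('a, 's) expr"
  | EInl "('a, 's) expr"
  | EInr "('a, 's) expr"
  | Case "('a, 's) expr" "('a, 's) expr" "('a, 's) expr"  \<comment> \<open>each branch binds index 0\<close>
  | App "('a, 's) expr" "('a, 's) expr"
  | New "('a, 's) expr" "('a, 's) lty"
  | Deref "('a, 's) expr"
  | Assign "('a, 's) expr" "('a, 's) expr"
  | Open 's "('a, 's) expr"
  | Opened 's "('a, 's) expr"
  | Close 's "('a, 's) expr"
  | Closed 's "('a, 's) expr"
  | When 's "('a, 's) expr" "('a, 's) expr"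
  | Loc nat

fun is_val :: "('a, 's) expr \<Rightarrow> bool" where
  "is_val (Lam e) = True"
| "is_val (Pair v v') = (is_val v \<and> is_val v')"
| "is_val (EInl v) = is_val v"
| "is_val (EInr v) = is_val v"
| "is_val EUnit = True"
| "is_val (Loc l) = True"
| "is_val (ENum n) = True"
| "is_val _ = False"

primrec lift :: "nat \<Rightarrow> ('a, 's) expr \<Rightarrow> ('a, 's) expr" where
  "lift k (Var i) = (if i < k then Var i else Var (Suc i))"
| "lift k EUnit = EUnit"
| "lift k (ENum n) = ENum n"
| "lift k (Lam e) = Lam (lift (Suc k) e)"
| "lift k (Pair e1 e2) = Pair (lift k e1) (lift k e2)"
| "lift k (Fst e) = Fst (lift k e)"
| "lift k (Snd e) = Snd (lift k e)"
| "lift k (EInl e) = EInl (lift k e)"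
| "lift k (EInr e) = EInr (lift k e)"
| "lift k (Case e e1 e2) = Case (lift k e) (lift (Suc k) e1) (lift (Suc k) e2)"
| "lift k (App e1 e2) = App (lift k e1) (lift k e2)"
| "lift k (New e t) = New (lift k e) t"
| "lift k (Deref e) = Deref (lift k e)"
| "lift k (Assign e1 e2) = Assign (lift k e1) (lift k e2)"
| "lift k (Open s e) = Open s (lift k e)"
| "lift k (Opened s e) = Opened s (lift k e)"
| "lift k (Close s e) = Close s (lift k e)"
| "lift k (Closed s e) = Closed s (lift k e)"
| "lift k (When s e1 e2) = When s (lift k e1) (lift k e2)"
| "lift k (Loc l) = Loc l"

definition up :: "(nat \<Rightarrow> ('a, 's) expr) \<Rightarrow> nat \<Rightarrow> ('a, 's) expr" where
  "up \<sigma> = case_nat (Var 0) (\<lambda>i. lift 0 (\<sigma> i))"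

primrec ssubst :: "(nat \<Rightarrow> ('a, 's) expr) \<Rightarrow> ('a, 's) expr \<Rightarrow> ('a, 's) expr" where
  "ssubst \<sigma> (Var i) = \<sigma> i"
| "ssubst \<sigma> EUnit = EUnit"
| "ssubst \<sigma> (ENum n) = ENum n"
| "ssubst \<sigma> (Lam e) = Lam (ssubst (up \<sigma>) e)"
| "ssubst \<sigma> (Pair e1 e2) = Pair (ssubst \<sigma> e1) (ssubst \<sigma> e2)"
| "ssubst \<sigma> (Fst e) = Fst (ssubst \<sigma> e)"
| "ssubst \<sigma> (Snd e) = Snd (ssubst \<sigma> e)"
| "ssubst \<sigma> (EInl e) = EInl (ssubst \<sigma> e)"
| "ssubst \<sigma> (EInr e) = EInr (ssubst \<sigma> e)"
| "ssubst \<sigma> (Case e e1 e2) = Case (ssubst \<sigma> e) (ssubst (up \<sigma>) e1) (ssubst (up \<sigma>) e2)"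
| "ssubst \<sigma> (App e1 e2) = App (ssubst \<sigma> e1) (ssubst \<sigma> e2)"
| "ssubst \<sigma> (New e t) = New (ssubst \<sigma> e) t"
| "ssubst \<sigma> (Deref e) = Deref (ssubst \<sigma> e)"
| "ssubst \<sigma> (Assign e1 e2) = Assign (ssubst \<sigma> e1) (ssubst \<sigma> e2)"
| "ssubst \<sigma> (Open s e) = Open s (ssubst \<sigma> e)"
| "ssubst \<sigma> (Opened s e) = Opened s (ssubst \<sigma> e)"
| "ssubst \<sigma> (Close s e) = Close s (ssubst \<sigma> e)"
| "ssubst \<sigma> (Closed s e) = Closed s (ssubst \<sigma> e)"
| "ssubst \<sigma> (When s e1 e2) = When s (ssubst \<sigma> e1) (ssubst \<sigma> e2)"
| "ssubst \<sigma> (Loc l) = Loc l"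

definition subst0 :: "('a, 's) expr \<Rightarrow> ('a, 's) expr \<Rightarrow> ('a, 's) expr" where
  "subst0 v e = ssubst (case_nat v Var) e"

definition apply_env :: "(nat \<rightharpoonup> ('a, 's) expr) \<Rightarrow> ('a, 's) expr \<Rightarrow> ('a, 's) expr" where
  "apply_env \<delta> e = ssubst (\<lambda>i. case \<delta> i of Some v \<Rightarrow> v | None \<Rightarrow> Var i) e"

type_synonym ('a, 's) state = "nat \<rightharpoonup> (('a, 's) expr \<times> ('a, 's) lty)"
type_synonym ('a, 's) senv = "nat \<rightharpoonup> ('a, 's) lty"

datatype ('a, 's) obs =
    Eps
  | Wr nat "('a, 's) lty" "('a, 's) expr"
  | OOpen 's
  | OClose 's
  | OUnopen 's
  | OUnclose 's

text \<open>pol(epsilon) is undefined; it is never consulted.\<close>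
fun obs_pol :: "('s \<Rightarrow> ('a, 's) pol) \<Rightarrow> ('a, 's) obs \<Rightarrow> ('a, 's) pol" where
  "obs_pol LP (Wr l t v) = lpol t"
| "obs_pol LP (OOpen s) = LP s"
| "obs_pol LP (OClose s) = LP s"
| "obs_pol LP (OUnopen s) = LP s"
| "obs_pol LP (OUnclose s) = LP s"
| "obs_pol LP Eps = undefined"

inductive step :: "('a, 's) expr \<Rightarrow> 's set \<Rightarrow> ('a, 's) state \<Rightarrow> ('a, 's) expr \<Rightarrow> ('a, 's) state
    \<Rightarrow> ('a, 's) obs \<Rightarrow> 's set \<Rightarrow> bool" where
  c_new: "step e L S e' S' w L' \<Longrightarrow> step (New e t) L S (New e' t) S' w L'"
| c_deref: "step e L S e' S' w L' \<Longrightarrow> step (Deref e) L S (Deref e') S' w L'"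
| c_assign1: "step e L S e' S' w L' \<Longrightarrow> step (Assign e e2) L S (Assign e' e2) S' w L'"
| c_assign2: "step e L S e' S' w L' \<Longrightarrow> step (Assign (Loc l) e) L S (Assign (Loc l) e') S' w L'"
| c_app1: "step e L S e' S' w L' \<Longrightarrow> step (App e e2) L S (App e' e2) S' w L'"
| c_app2: "step e L S e' S' w L' \<Longrightarrow> step (App (Lam b) e) L S (App (Lam b) e') S' w L'"
| c_pair1: "step e L S e' S' w L' \<Longrightarrow> step (Pair e e2) L S (Pair e' e2) S' w L'"
| c_pair2: "is_val v \<Longrightarrow> step e L S e' S' w L' \<Longrightarrow> step (Pair v e) L S (Pair v e') S' w L'"
| c_fst: "step e L S e' S' w L' \<Longrightarrow> step (Fst e) L S (Fst e') S' w L'"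
| c_snd: "step e L S e' S' w L' \<Longrightarrow> step (Snd e) L S (Snd e') S' w L'"
| c_inl: "step e L S e' S' w L' \<Longrightarrow> step (EInl e) L S (EInl e') S' w L'"
| c_inr: "step e L S e' S' w L' \<Longrightarrow> step (EInr e) L S (EInr e') S' w L'"
| c_case: "step e L S e' S' w L' \<Longrightarrow> step (Case e e1 e2) L S (Case e' e1 e2) S' w L'"
| l_open: "step (Open s e) L S (Opened s e) S (OOpen s) L"
| l_opened: "step e (L \<union> {s}) S e' S' w L' \<Longrightarrow> step (Opened s e) L S (Opened s e') S' w L'"
| l_opened_v: "is_val v \<Longrightarrow> step (Opened s v) L S v S (OUnopen s) L"
| l_close: "step (Close s e) L S (Closed s e) S (OClose s) L"
| l_closed: "step e (L - {s}) S e' S' w L' \<Longrightarrow> step (Closed s e) L S (Closed s e') S' w L'"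
| l_closed_v: "is_val v \<Longrightarrow> step (Closed s v) L S v S (OUnclose s) L"
| w_then: "s \<in> L \<Longrightarrow> step e L S e'' S' w L' \<Longrightarrow> step (When s e e2) L S (When s e'' e2) S' w L'"
| w_else: "s \<notin> L \<Longrightarrow> step e2 L S e'' S' w L' \<Longrightarrow> step (When s e e2) L S (When s e e'') S' w L'"
| w_then_v: "s \<in> L \<Longrightarrow> is_val v \<Longrightarrow> step (When s v e2) L S v S Eps L"
| w_else_v: "s \<notin> L \<Longrightarrow> is_val v \<Longrightarrow> step (When s e v) L S v S Eps L"
| b_deref: "S l = Some (v, t) \<Longrightarrow> step (Deref (Loc l)) L S v S Eps L"
| b_new: "is_val v \<Longrightarrow> l \<notin> dom S \<Longrightarrow> step (New v t) L S (Loc l) (S(l \<mapsto> (v, t))) (Wr l t v) L"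
| b_assign: "is_val v \<Longrightarrow> S l = Some (u, t) \<Longrightarrow>
     step (Assign (Loc l) v) L S EUnit (S(l \<mapsto> (v, t))) (Wr l t v) L"
| b_beta: "is_val v \<Longrightarrow> step (App (Lam e) v) L S (subst0 v e) S Eps L"
| b_fst: "is_val v \<Longrightarrow> is_val v' \<Longrightarrow> step (Fst (Pair v v')) L S v S Eps L"
| b_snd: "is_val v \<Longrightarrow> is_val v' \<Longrightarrow> step (Snd (Pair v v')) L S v' S Eps L"
| b_case_l: "is_val v \<Longrightarrow> step (Case (EInl v) e1 e2) L S (subst0 v e1) S Eps L"
| b_case_r: "is_val v \<Longrightarrow> step (Case (EInr v) e1 e2) L S (subst0 v e2) S Eps L"

inductive subl :: "('a, 's) lty \<Rightarrow> ('a, 's) lty \<Rightarrow> bool"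
  and subr :: "('a, 's) raw \<Rightarrow> ('a, 's) raw \<Rightarrow> bool" where
  s_lab: "pol_le p p' \<Longrightarrow> subr A B \<Longrightarrow> subl (Lab A p) (Lab B p')"
| s_unit: "subr TUnit TUnit"
| s_nat: "subr TNat TNat"
| s_ref: "subr (TRef t) (TRef t)"
| s_prod: "subl t0 t1 \<Longrightarrow> subl t2 t3 \<Longrightarrow> subr (TProd t0 t2) (TProd t1 t3)"
| s_sum: "subl t0 t1 \<Longrightarrow> subl t2 t3 \<Longrightarrow> subr (TSum t0 t2) (TSum t1 t3)"
| s_fun: "subl t0 t1 \<Longrightarrow> subl t2 t3 \<Longrightarrow> pol_le p' p \<Longrightarrow> L \<subseteq> L' \<Longrightarrow>
          subr (TFun t1 L p t2) (TFun t0 L' p' t3)"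

section \<open>Typing  (typing LP Gamma Sigma theta pc e tau)\<close>

type_synonym ('a, 's) tenv = "nat \<rightharpoonup> ('a, 's) lty"

inductive typing :: "('s \<Rightarrow> ('a, 's) pol) \<Rightarrow> ('a, 's) tenv \<Rightarrow> 's set \<Rightarrow> ('a, 's) senv
    \<Rightarrow> ('a, 's) pol \<Rightarrow> ('a, 's) expr \<Rightarrow> ('a, 's) lty \<Rightarrow> bool"
  for LP :: "'s \<Rightarrow> ('a, 's) pol" where
  t_var: "G x = Some t \<Longrightarrow> typing LP G L th pc (Var x) t"
| t_unit: "typing LP G L th pc EUnit (Lab TUnit pbot)"
| t_num: "typing LP G L th pc (ENum n) (Lab TNat pbot)"
| t_loc: "th l = Some t \<Longrightarrow> typing LP G L th pc (Loc l) (Lab (TRef t) pbot)"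
| t_lam: "typing LP (case_nat (Some t1) G) L' th pc' e t2 \<Longrightarrow>
          typing LP G L th pc (Lam e) (Lab (TFun t1 L' pc' t2) pbot)"
| t_open: "typing LP G (L \<union> {s}) th pc e t \<Longrightarrow> pol_le pc (LP s) \<Longrightarrow> typing LP G L th pc (Open s e) t"
| t_opened: "typing LP G (L \<union> {s}) th pc e t \<Longrightarrow> pol_le pc (LP s) \<Longrightarrow> typing LP G L th pc (Opened s e) t"
| t_close: "typing LP G (L - {s}) th pc e t \<Longrightarrow> pol_le pc (LP s) \<Longrightarrow> typing LP G L th pc (Close s e) t"
| t_closed: "typing LP G (L - {s}) th pc e t \<Longrightarrow> pol_le pc (LP s) \<Longrightarrow> typing LP G L th pc (Closed s e) t"
| t_pair: "typing LP G L th pc e1 t1 \<Longrightarrow> typing LP G L th pc e2 t2 \<Longrightarrow>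
           typing LP G L th pc (Pair e1 e2) (Lab (TProd t1 t2) pbot)"
| t_fst: "typing LP G L th pc e (Lab (TProd t1 t2) p) \<Longrightarrow> pol_le p (lpol t1) \<Longrightarrow>
          typing LP G L th pc (Fst e) t1"
| t_snd: "typing LP G L th pc e (Lab (TProd t1 t2) p) \<Longrightarrow> pol_le p (lpol t2) \<Longrightarrow>
          typing LP G L th pc (Snd e) t2"
| t_inl: "typing LP G L th pc e t1 \<Longrightarrow> typing LP G L th pc (EInl e) (Lab (TSum t1 t2) pbot)"
| t_inr: "typing LP G L th pc e t2 \<Longrightarrow> typing LP G L th pc (EInr e) (Lab (TSum t1 t2) pbot)"
| t_case: "typing LP G L th pc e (Lab (TSum t1 t2) p) \<Longrightarrow> pol_le p (lpol t) \<Longrightarrow>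
           typing LP (case_nat (Some t1) G) L th (pjoin pc p) e1 t \<Longrightarrow>
           typing LP (case_nat (Some t2) G) L th (pjoin pc p) e2 t \<Longrightarrow>
           typing LP G L th pc (Case e e1 e2) t"
| t_sub: "typing LP G L th pc' e t' \<Longrightarrow> pol_le pc pc' \<Longrightarrow> subl t' t \<Longrightarrow> typing LP G L th pc e t"
| t_app: "typing LP G L th pc e1 (Lab (TFun t1 L' pc' t2) p) \<Longrightarrow> typing LP G L th pc e2 t1' \<Longrightarrow>
          pol_le p (lpol t2) \<Longrightarrow> pol_le (pjoin pc p) pc' \<Longrightarrow> subl t1' t1 \<Longrightarrow> L' \<subseteq> L \<Longrightarrow>
          typing LP G L th pc (App e1 e2) t2"
| t_deref: "typing LP G L th pc e (Lab (TRef t) p) \<Longrightarrow> pol_le p (lpol t') \<Longrightarrow> subl t t' \<Longrightarrow>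
            typing LP G L th pc (Deref e) t'"
| t_new: "typing LP G L th pc e t' \<Longrightarrow> pol_le pc (lpol t) \<Longrightarrow> subl (lspec t' L) t \<Longrightarrow>
          typing LP G L th pc (New e t) (Lab (TRef t) pbot)"
| t_assign: "typing LP G L th pc e (Lab (TRef t') p) \<Longrightarrow> typing LP G L th pc e' t \<Longrightarrow>
             subl (lspec t L) t' \<Longrightarrow> pol_le (pjoin pc p) (lpol t') \<Longrightarrow>
             typing LP G L th pc (Assign e e') (Lab TUnit pbot)"
| t_when: "typing LP G (L \<union> {s}) th (pjoin pc (LP s)) e1 t \<Longrightarrow>
           typing LP G L th (pjoin pc (LP s)) e2 t \<Longrightarrow> pol_le (LP s) (lpol t) \<Longrightarrow>
           typing LP G L th pc (When s e1 e2) t"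

section \<open>Unary step-indexed logical relation\<close>

text \<open>vrel LP m tau e theta  means (e, theta, m) in V[[tau]];
  erel LP m pc tau e theta  means (e, theta, m) in E^pc[[tau]].
  theta' extends theta is written as map_le theta theta'.\<close>

function vrel :: "('s \<Rightarrow> ('a, 's) pol) \<Rightarrow> nat \<Rightarrow> ('a, 's) lty \<Rightarrow> ('a, 's) expr \<Rightarrow> ('a, 's) senv \<Rightarrow> bool"
  and vraw :: "('s \<Rightarrow> ('a, 's) pol) \<Rightarrow> nat \<Rightarrow> ('a, 's) raw \<Rightarrow> ('a, 's) expr \<Rightarrow> ('a, 's) senv \<Rightarrow> bool"
  and erel :: "('s \<Rightarrow> ('a, 's) pol) \<Rightarrow> nat \<Rightarrow> ('a, 's) pol \<Rightarrow> ('a, 's) lty \<Rightarrow> ('a, 's) expr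
                \<Rightarrow> ('a, 's) senv \<Rightarrow> bool" where
  "vrel LP m (Lab A p) e th = vraw LP m A e th"
| "vraw LP m TUnit e th = (e = EUnit)"
| "vraw LP m TNat e th = (\<exists>n. e = ENum n)"
| "vraw LP m (TProd t1 t2) e th =
     (\<exists>v1 v2. e = Pair v1 v2 \<and> vrel LP m t1 v1 th \<and> vrel LP m t2 v2 th)"
| "vraw LP m (TSum t1 t2) e th =
     ((\<exists>v. e = EInl v \<and> vrel LP m t1 v th) \<or> (\<exists>v. e = EInr v \<and> vrel LP m t2 v th))"
| "vraw LP m (TRef t) e th = (\<exists>l. e = Loc l \<and> th l = Some t)"
| "vraw LP m (TFun t1 L pc t2) e th =
     (\<exists>b. e = Lam b \<and>
        (\<forall>th' m' v. th \<subseteq>\<^sub>m th' \<longrightarrow> m' < m \<longrightarrow> vrel LP m' t1 v th' \<longrightarrow>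
            erel LP m' pc t2 (subst0 v b) th'))"
| "erel LP m pc t e th =
     (vrel LP m t e th \<or>
      (\<not> is_val e \<and>
       (\<forall>S th' m' e' S' w L L'. th \<subseteq>\<^sub>m th' \<longrightarrow> m' < m \<longrightarrow>
          \<comment> \<open>(S, m') \<triangleright> th'\<close>
          (dom th' \<subseteq> dom S \<and> (\<forall>l u. th' l = Some u \<longrightarrow>
               (\<exists>v. S l = Some (v, u) \<and> vrel LP m' u v th'))) \<longrightarrow>
          step e L S e' S' w L' \<longrightarrow>
          ((w = Eps \<or> pol_le pc (obs_pol LP w)) \<and>
           (\<exists>th''. th' \<subseteq>\<^sub>m th'' \<and>
              \<comment> \<open>(S', m') \<triangleright> th''\<close>
              (dom th'' \<subseteq> dom S' \<and> (\<forall>l u. th'' l = Some u \<longrightarrow>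
                 (\<exists>v. S' l = Some (v, u) \<and> vrel LP m' u v th''))) \<and>
              erel LP m' pc t e' th'')))))"
  by pat_completeness auto
termination
  by (relation "measures [
      \<lambda>x. case x of Inl (LP, m, t, e, th) \<Rightarrow> m | Inr (Inl (LP, m, A, e, th)) \<Rightarrow> m
                 | Inr (Inr (LP, m, pc, t, e, th)) \<Rightarrow> m,
      \<lambda>x. case x of Inl (LP, m, t, e, th) \<Rightarrow> size t | Inr (Inl (LP, m, A, e, th)) \<Rightarrow> size A
                 | Inr (Inr (LP, m, pc, t, e, th)) \<Rightarrow> Suc (size t)]") auto

definition stok :: "('s \<Rightarrow> ('a, 's) pol) \<Rightarrow> ('a, 's) state \<Rightarrow> nat \<Rightarrow> ('a, 's) senv \<Rightarrow> bool" where
  "stok LP S m th \<longleftrightarrow> dom th \<subseteq> dom S \<and>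
     (\<forall>l u. th l = Some u \<longrightarrow> (\<exists>v. S l = Some (v, u) \<and> vrel LP m u v th))"

definition venv :: "('s \<Rightarrow> ('a, 's) pol) \<Rightarrow> nat \<Rightarrow> ('a, 's) tenv \<Rightarrow> (nat \<rightharpoonup> ('a, 's) expr)
    \<Rightarrow> ('a, 's) senv \<Rightarrow> bool" where
  "venv LP m G \<delta> th \<longleftrightarrow> dom G \<subseteq> dom \<delta> \<and>
     (\<forall>x t v. G x = Some t \<longrightarrow> \<delta> x = Some v \<longrightarrow> vrel LP m t v th)"

end

theory Submission
  imports Defs
begin

text \<open>The theorem is the fundamental property of a unary step-indexed Kripke logical relation.
  Call e semantically well typed when every closing substitution that is related to the
  typing context at index m in an extension of the state environment sends e into the
  expression relation.  Each typing rule is then a compatibility lemma for semantic typing.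
  Values are handled by downward closure of the relation (in the step index and the state
  environment) and by soundness of subtyping; compound expressions are reduced to their
  redexes by a bind lemma for evaluation contexts.  The only observations a well-typed
  expression emits are writes, permitted by the side conditions pc \<sqsubseteq> \<tau> of new and
  assignment, and lock observations, permitted by pc \<sqsubseteq> LockPolicy(\<sigma>) of open and
  close; the raised pc of the branches of case and when is harmless because the expression
  relation is antitone in pc.\<close>

section \<open>Substitution\<close>

definition lift_var :: "nat \<Rightarrow> nat \<Rightarrow> nat" where
  "lift_var k i = (if i < k then i else Suc i)"

definition up_ren :: "(nat \<Rightarrow> nat) \<Rightarrow> nat \<Rightarrow> nat" where
  "up_ren \<rho> = case_nat 0 (\<lambda>j. Suc (\<rho> j))"

lemma lift_var_0 [simp]: "lift_var 0 i = Suc i"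
  by (simp add: lift_var_def)

lemma up_ren_lift_var: "up_ren (lift_var k) = lift_var (Suc k)"
  by (rule ext) (auto simp: up_ren_def lift_var_def split: nat.split)

lemma up_Var_ren: "up (\<lambda>i. Var (\<rho> i)) = (\<lambda>i. Var (up_ren \<rho> i))"
  by (rule ext) (auto simp: up_def up_ren_def split: nat.split)

lemma lift_eq_ssubst: "lift k e = ssubst (\<lambda>i. Var (lift_var k i)) e"
  by (induction e arbitrary: k) (simp_all add: up_Var_ren up_ren_lift_var, simp add: lift_var_def)

lemma up_comp_up_ren: "(\<lambda>i. up \<sigma> (up_ren \<rho> i)) = up (\<lambda>i. \<sigma> (\<rho> i))"
  by (rule ext) (auto simp: up_def up_ren_def split: nat.split)

lemma ssubst_ren: "ssubst \<sigma> (ssubst (\<lambda>i. Var (\<rho> i)) e) = ssubst (\<lambda>i. \<sigma> (\<rho> i)) e"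
  by (induction e arbitrary: \<sigma> \<rho>) (auto simp: up_Var_ren up_comp_up_ren)

lemma ren_up:
  "(\<lambda>i. ssubst (\<lambda>j. Var (up_ren \<rho> j)) (up \<sigma> i)) = up (\<lambda>i. ssubst (\<lambda>j. Var (\<rho> j)) (\<sigma> i))"
proof
  fix i show "ssubst (\<lambda>j. Var (up_ren \<rho> j)) (up \<sigma> i) = up (\<lambda>i. ssubst (\<lambda>j. Var (\<rho> j)) (\<sigma> i)) i"
    by (cases i) (simp_all add: up_def up_ren_def lift_eq_ssubst ssubst_ren)
qed

lemma ren_ssubst:
  "ssubst (\<lambda>i. Var (\<rho> i)) (ssubst \<sigma> e) = ssubst (\<lambda>i. ssubst (\<lambda>j. Var (\<rho> j)) (\<sigma> i)) e"
  by (induction e arbitrary: \<sigma> \<rho>) (simp_all add: up_Var_ren ren_up)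

lemma up_comp_up: "(\<lambda>i. ssubst (up \<tau>) (up \<sigma> i)) = up (\<lambda>i. ssubst \<tau> (\<sigma> i))"
proof
  fix i show "ssubst (up \<tau>) (up \<sigma> i) = up (\<lambda>i. ssubst \<tau> (\<sigma> i)) i"
  proof (cases i)
    case (Suc j)
    have "ssubst (up \<tau>) (lift 0 (\<sigma> j)) = ssubst (\<lambda>i. lift 0 (\<tau> i)) (\<sigma> j)"
      by (simp add: lift_eq_ssubst[of 0 "\<sigma> j"] ssubst_ren up_def)
    also have "\<dots> = lift 0 (ssubst \<tau> (\<sigma> j))"
      by (simp add: lift_eq_ssubst ren_ssubst)
    finally show ?thesis using Suc by (simp add: up_def)
  qed (simp add: up_def)
qed

lemma ssubst_ssubst: "ssubst \<tau> (ssubst \<sigma> e) = ssubst (\<lambda>i. ssubst \<tau> (\<sigma> i)) e"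
  by (induction e arbitrary: \<sigma> \<tau>) (auto simp: up_comp_up)

lemma up_Var: "up Var = Var"
  by (rule ext) (auto simp: up_def split: nat.split)

lemma ssubst_Var: "ssubst Var e = e"
  by (induction e) (auto simp: up_Var)

lemma subst0_ssubst_up: "subst0 v (ssubst (up \<sigma>) e) = ssubst (case_nat v \<sigma>) e"
proof -
  have "ssubst (case_nat v Var) (up \<sigma> i) = case_nat v \<sigma> i" for i
  proof (cases i)
    case (Suc j)
    then show ?thesis
      using ssubst_Var[of "\<sigma> j"] by (simp add: up_def lift_eq_ssubst ssubst_ren)
  qed (simp add: up_def)
  then show ?thesis by (simp add: subst0_def ssubst_ssubst)
qed

section \<open>Basic properties of the logical relation\<close>

lemma pol_le_refl: "pol_le p p"
  unfolding pol_le_def by blast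

lemma pol_le_trans: "pol_le p q \<Longrightarrow> pol_le q r \<Longrightarrow> pol_le p r"
  unfolding pol_le_def by (meson order_trans)

lemma pol_le_pjoin: "pol_le p (pjoin p q)"
  unfolding pol_le_def pjoin_def by blast

lemma step_not_val: "step e L S e' S' w L' \<Longrightarrow> \<not> is_val e"
  by (induction rule: step.induct) auto

lemma subl_refl: "subl t t"
proof -
  have "subr A A \<and> subl t t" for A :: "('a, 's) raw" and t :: "('a, 's) lty"
    by (induction rule: raw_lty.induct) (auto intro: subl_subr.intros pol_le_refl)
  then show ?thesis by blast
qed

declare erel.simps [simp del]

lemma vrel_is_val: "vrel LP m t v th \<Longrightarrow> is_val v"
proof -
  have "(\<forall>v. vraw LP m A v th \<longrightarrow> is_val v) \<and> (\<forall>v. vrel LP m t v th \<longrightarrow> is_val v)" for A t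
    by (induction rule: raw_lty.induct) auto
  then show "vrel LP m t v th \<Longrightarrow> is_val v" by blast
qed

lemma vrel_lspec [simp]: "vrel LP m (lspec t L) v th = vrel LP m t v th"
  by (cases t) simp

lemma erel_iff: "erel LP m pc t e th \<longleftrightarrow> vrel LP m t e th \<or> (\<not> is_val e \<and>
   (\<forall>S th' m' e' S' w L L'. th \<subseteq>\<^sub>m th' \<longrightarrow> m' < m \<longrightarrow> stok LP S m' th' \<longrightarrow>
      step e L S e' S' w L' \<longrightarrow>
      ((w = Eps \<or> pol_le pc (obs_pol LP w)) \<and>
       (\<exists>th''. th' \<subseteq>\<^sub>m th'' \<and> stok LP S' m' th'' \<and> erel LP m' pc t e' th''))))"
  by (subst erel.simps) (simp only: stok_def)

lemma erel_valI: "vrel LP m t v th \<Longrightarrow> erel LP m pc t v th"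
  by (subst erel_iff) blast

lemma erel_valD: "erel LP m pc t v th \<Longrightarrow> is_val v \<Longrightarrow> vrel LP m t v th"
  by (subst (asm) erel_iff) blast

lemma erel_stepI:
  assumes "\<not> is_val e"
    and "\<And>S th' m' e' S' w L L'. th \<subseteq>\<^sub>m th' \<Longrightarrow> m' < m \<Longrightarrow> stok LP S m' th' \<Longrightarrow>
      step e L S e' S' w L' \<Longrightarrow>
      (w = Eps \<or> pol_le pc (obs_pol LP w)) \<and>
      (\<exists>th''. th' \<subseteq>\<^sub>m th'' \<and> stok LP S' m' th'' \<and> erel LP m' pc t e' th'')"
  shows "erel LP m pc t e th"
  using assms by (subst erel_iff) blast

lemma erel_stepD:
  assumes "erel LP m pc t e th" "th \<subseteq>\<^sub>m th'" "m' < m" "stok LP S m' th'"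
    "step e L S e' S' w L'"
  shows "(w = Eps \<or> pol_le pc (obs_pol LP w)) \<and>
    (\<exists>th''. th' \<subseteq>\<^sub>m th'' \<and> stok LP S' m' th'' \<and> erel LP m' pc t e' th'')"
proof -
  have "\<not> is_val e" using step_not_val assms(5) by blast
  then have "\<not> vrel LP m t e th" using vrel_is_val by blast
  then show ?thesis using assms unfolding erel_iff[of LP m pc t e th] by blast
qed

lemma erel_pure_stepI:
  assumes "\<not> is_val e"
    and "\<And>L S e' S' w L' m' th'. step e L S e' S' w L' \<Longrightarrow> m' < m \<Longrightarrow> th \<subseteq>\<^sub>m th' \<Longrightarrow>
      stok LP S m' th' \<Longrightarrow>
      S' = S \<and> (w = Eps \<or> pol_le pc (obs_pol LP w)) \<and> erel LP m' pc t e' th'"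
  shows "erel LP m pc t e th"
  using assms(2) map_le_refl by (intro erel_stepI[OF assms(1)]) blast

lemma vrel_mono: "vrel LP m t v th \<Longrightarrow> m' \<le> m \<Longrightarrow> th \<subseteq>\<^sub>m th' \<Longrightarrow> vrel LP m' t v th'"
proof -
  have "(\<forall>m v th m' th'. vraw LP m A v th \<longrightarrow> m' \<le> m \<longrightarrow> th \<subseteq>\<^sub>m th' \<longrightarrow> vraw LP m' A v th') \<and>
    (\<forall>m v th m' th'. vrel LP m t v th \<longrightarrow> m' \<le> m \<longrightarrow> th \<subseteq>\<^sub>m th' \<longrightarrow> vrel LP m' t v th')"
    for A t
  proof (induction rule: raw_lty.induct)
    case (TRef t)
    then show ?case by (auto simp: map_le_def dom_def)
  next
    case (TFun t1 L pc t2)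
    show ?case
    proof (intro allI impI)
      fix m v th m' th'
      assume "vraw LP m (TFun t1 L pc t2) v th" "m' \<le> m" "th \<subseteq>\<^sub>m th'"
      then obtain b where b: "v = Lam b" and F: "\<forall>th2. th \<subseteq>\<^sub>m th2 \<longrightarrow>
          (\<forall>m2<m. \<forall>v. vrel LP m2 t1 v th2 \<longrightarrow> erel LP m2 pc t2 (subst0 v b) th2)"
        by auto
      have "\<forall>th2. th' \<subseteq>\<^sub>m th2 \<longrightarrow>
          (\<forall>m2<m'. \<forall>v. vrel LP m2 t1 v th2 \<longrightarrow> erel LP m2 pc t2 (subst0 v b) th2)"
        using F \<open>m' \<le> m\<close> \<open>th \<subseteq>\<^sub>m th'\<close> map_le_trans less_le_trans by metis
      then show "vraw LP m' (TFun t1 L pc t2) v th'" using b by auto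
    qed
  qed auto
  then show "vrel LP m t v th \<Longrightarrow> m' \<le> m \<Longrightarrow> th \<subseteq>\<^sub>m th' \<Longrightarrow> vrel LP m' t v th'" by blast
qed

lemma erel_mono:
  assumes "erel LP m pc t e th" "m' \<le> m" "th \<subseteq>\<^sub>m th'"
  shows "erel LP m' pc t e th'"
proof (cases "is_val e")
  case True
  then show ?thesis using assms erel_valD erel_valI vrel_mono by blast
next
  case False
  show ?thesis
  proof (rule erel_stepI[OF False])
    fix S th'' m'' e' S' w L L'
    assume "th' \<subseteq>\<^sub>m th''" "m'' < m'" "stok LP S m'' th''" "step e L S e' S' w L'"
    moreover from \<open>th' \<subseteq>\<^sub>m th''\<close> have "th \<subseteq>\<^sub>m th''" using assms(3) map_le_trans by blast
    moreover from \<open>m'' < m'\<close> have "m'' < m" using assms(2) by simp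
    ultimately show "(w = Eps \<or> pol_le pc (obs_pol LP w)) \<and>
       (\<exists>th'''. th'' \<subseteq>\<^sub>m th''' \<and> stok LP S' m'' th''' \<and> erel LP m'' pc t e' th''')"
      using erel_stepD[OF assms(1)] by blast
  qed
qed

text \<open>Function subtyping relates the expression relations of the results at smaller step
  indices, hence the joint induction on the index.\<close>

lemma subtyping_sound:
  "(\<forall>t t' v th. subl t t' \<longrightarrow> vrel LP m t v th \<longrightarrow> vrel LP m t' v th) \<and>
   (\<forall>pc pc' t t' e th. subl t t' \<longrightarrow> pol_le pc' pc \<longrightarrow> erel LP m pc t e th \<longrightarrow> erel LP m pc' t' e th)"
proof (induction m rule: less_induct)
  case (less m)
  have vrel_sub: "(subl t t' \<longrightarrow> (\<forall>v th. vrel LP m t v th \<longrightarrow> vrel LP m t' v th)) \<and>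
      (subr A B \<longrightarrow> (\<forall>v th. vraw LP m A v th \<longrightarrow> vraw LP m B v th))" for t t' A B
  proof (induction rule: subl_subr.induct)
    case (s_fun t0 t1 t2 t3 p' p L L')
    then show ?case using less by simp blast
  qed auto
  have "erel LP m pc' t' e th" if "subl t t'" "pol_le pc' pc" "erel LP m pc t e th" for pc pc' t t' e th
  proof (cases "is_val e")
    case True
    then show ?thesis using that vrel_sub erel_valD erel_valI by blast
  next
    case False
    show ?thesis
    proof (rule erel_stepI[OF False])
      fix S th' m' e' S' w L L'
      assume "th \<subseteq>\<^sub>m th'" "m' < m" "stok LP S m' th'" "step e L S e' S' w L'"
      with erel_stepD[OF that(3) this] show "(w = Eps \<or> pol_le pc' (obs_pol LP w)) \<and>
          (\<exists>th''. th' \<subseteq>\<^sub>m th'' \<and> stok LP S' m' th'' \<and> erel LP m' pc' t' e' th'')"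
        using less that pol_le_trans by blast
    qed
  qed
  with vrel_sub show ?case by blast
qed

lemma vrel_subl: "vrel LP m t v th \<Longrightarrow> subl t t' \<Longrightarrow> vrel LP m t' v th"
  using subtyping_sound by blast

lemma erel_subl: "erel LP m pc t e th \<Longrightarrow> subl t t' \<Longrightarrow> pol_le pc' pc \<Longrightarrow> erel LP m pc' t' e th"
  using subtyping_sound by blast

lemma erel_pc_mono: "erel LP m pc t e th \<Longrightarrow> pol_le pc' pc \<Longrightarrow> erel LP m pc' t e th"
  using erel_subl subl_refl by blast

section \<open>Evaluation contexts and lock scopes\<close>

definition eval_ctx :: "(('a, 's) expr \<Rightarrow> ('a, 's) expr) \<Rightarrow> bool" where
  "eval_ctx K \<longleftrightarrow> (\<forall>e. \<not> is_val e \<longrightarrow> \<not> is_val (K e) \<and>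
     (\<forall>L S e'' S' w L'. step (K e) L S e'' S' w L' \<longrightarrow> (\<exists>e'. step e L S e' S' w L' \<and> e'' = K e')))"

inductive_cases step_NewE: "step (New e t) L S e' S' w L'"
inductive_cases step_DerefE: "step (Deref e) L S e' S' w L'"
inductive_cases step_AssignE: "step (Assign e1 e2) L S e' S' w L'"
inductive_cases step_AppE: "step (App e1 e2) L S e' S' w L'"
inductive_cases step_App_LamE: "step (App (Lam b) e) L S e' S' w L'"
inductive_cases step_Assign_LocE: "step (Assign (Loc l) e) L S e' S' w L'"
inductive_cases step_PairE: "step (Pair e1 e2) L S e' S' w L'"
inductive_cases step_FstE: "step (Fst e) L S e' S' w L'"
inductive_cases step_SndE: "step (Snd e) L S e' S' w L'"
inductive_cases step_InlE: "step (EInl e) L S e' S' w L'"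
inductive_cases step_InrE: "step (EInr e) L S e' S' w L'"
inductive_cases step_CaseE: "step (Case e e1 e2) L S e' S' w L'"
inductive_cases step_OpenE: "step (Open s e) L S e' S' w L'"
inductive_cases step_OpenedE: "step (Opened s e) L S e' S' w L'"
inductive_cases step_CloseE: "step (Close s e) L S e' S' w L'"
inductive_cases step_ClosedE: "step (Closed s e) L S e' S' w L'"
inductive_cases step_WhenE: "step (When s e1 e2) L S e' S' w L'"

lemma eval_ctx_New: "eval_ctx (\<lambda>x. New x t)"
  and eval_ctx_Deref: "eval_ctx Deref"
  and eval_ctx_Assign1: "eval_ctx (\<lambda>x. Assign x e2)"
  and eval_ctx_Assign2: "eval_ctx (\<lambda>x. Assign (Loc l) x)"
  and eval_ctx_App1: "eval_ctx (\<lambda>x. App x e2)"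
  and eval_ctx_App2: "eval_ctx (\<lambda>x. App (Lam b) x)"
  and eval_ctx_Pair1: "eval_ctx (\<lambda>x. Pair x e2)"
  and eval_ctx_Pair2: "is_val v \<Longrightarrow> eval_ctx (\<lambda>x. Pair v x)"
  and eval_ctx_Fst: "eval_ctx Fst"
  and eval_ctx_Snd: "eval_ctx Snd"
  and eval_ctx_Inl: "eval_ctx EInl"
  and eval_ctx_Inr: "eval_ctx EInr"
  and eval_ctx_Case: "eval_ctx (\<lambda>x. Case x e1 e2)"
  unfolding eval_ctx_def
  by (auto elim!: step_App_LamE step_Assign_LocE
      elim: step_NewE step_DerefE step_AssignE step_AppE step_PairE step_FstE step_SndE
      step_InlE step_InrE step_CaseE dest: step_not_val)

lemma erel_bind:
  assumes "eval_ctx K" "erel LP m pc t1 e th"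
    "\<And>th' m' v. th \<subseteq>\<^sub>m th' \<Longrightarrow> m' \<le> m \<Longrightarrow> vrel LP m' t1 v th' \<Longrightarrow> erel LP m' pc t (K v) th'"
  shows "erel LP m pc t (K e) th"
  using assms(2,3)
proof (induction m arbitrary: e th rule: less_induct)
  case (less m)
  show ?case
  proof (cases "is_val e")
    case True
    then show ?thesis using less.prems erel_valD by (metis le_refl map_le_refl)
  next
    case False
    then have nv: "\<not> is_val (K e)" and inv: "\<And>L S e'' S' w L'. step (K e) L S e'' S' w L' \<Longrightarrow>
        \<exists>e'. step e L S e' S' w L' \<and> e'' = K e'"
      using assms(1) unfolding eval_ctx_def by blast+
    show ?thesis
    proof (rule erel_stepI[OF nv])
      fix S th' m' e'' S' w L L'
      assume a: "th \<subseteq>\<^sub>m th'" "m' < m" "stok LP S m' th'" "step (K e) L S e'' S' w L'"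
      obtain e' where st: "step e L S e' S' w L'" and e'': "e'' = K e'" using inv[OF a(4)] by blast
      from erel_stepD[OF less.prems(1) a(1-3) st]
      obtain th'' where obs: "w = Eps \<or> pol_le pc (obs_pol LP w)" and th'': "th' \<subseteq>\<^sub>m th''"
        "stok LP S' m' th''" "erel LP m' pc t1 e' th''" by blast
      have "erel LP m' pc t (K e') th''"
      proof (rule less.IH[OF a(2) th''(3)])
        fix th3 m3 v assume "th'' \<subseteq>\<^sub>m th3" "m3 \<le> m'" "vrel LP m3 t1 v th3"
        then show "erel LP m3 pc t (K v) th3"
          using less.prems(2) map_le_trans[OF a(1) map_le_trans[OF th''(1)]] a(2) by simp
      qed
      with obs th'' e'' show "(w = Eps \<or> pol_le pc (obs_pol LP w)) \<and>
          (\<exists>th''. th' \<subseteq>\<^sub>m th'' \<and> stok LP S' m' th'' \<and> erel LP m' pc t e'' th'')"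
        by blast
    qed
  qed
qed

lemma erel_scope:
  assumes "erel LP m pc t e th" "pol_le pc (LP s)"
    and nv: "\<And>e. \<not> is_val (K e)"
    and inv: "\<And>e L S e'' S' w L'. step (K e) L S e'' S' w L' \<Longrightarrow>
      (\<exists>L0 e'. step e L0 S e' S' w L' \<and> e'' = K e') \<or>
      (is_val e \<and> e'' = e \<and> S' = S \<and> obs_pol LP w = LP s)"
  shows "erel LP m pc t (K e) th"
  using assms(1)
proof (induction m arbitrary: e th rule: less_induct)
  case (less m)
  show ?case
  proof (rule erel_stepI[OF nv])
    fix S th' m' e'' S' w L L'
    assume a: "th \<subseteq>\<^sub>m th'" "m' < m" "stok LP S m' th'" "step (K e) L S e'' S' w L'"
    from inv[OF a(4)] show "(w = Eps \<or> pol_le pc (obs_pol LP w)) \<and>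
        (\<exists>th''. th' \<subseteq>\<^sub>m th'' \<and> stok LP S' m' th'' \<and> erel LP m' pc t e'' th'')"
    proof (elim disjE exE conjE)
      fix L0 e' assume "step e L0 S e' S' w L'" "e'' = K e'"
      with erel_stepD[OF less.prems a(1-3)] less.IH[OF a(2)] show ?thesis by blast
    next
      assume "is_val e" "e'' = e" "S' = S" "obs_pol LP w = LP s"
      moreover have "erel LP m' pc t e th'"
        using erel_mono[OF less.prems] a(1,2) by simp
      ultimately show ?thesis using a(3) assms(2) map_le_refl by metis
    qed
  qed
qed

lemma erel_Opened: "erel LP m pc t e th \<Longrightarrow> pol_le pc (LP s) \<Longrightarrow> erel LP m pc t (Opened s e) th"
  by (erule erel_scope) (auto elim: step_OpenedE)

lemma erel_Closed: "erel LP m pc t e th \<Longrightarrow> pol_le pc (LP s) \<Longrightarrow> erel LP m pc t (Closed s e) th"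
  by (erule erel_scope) (auto elim: step_ClosedE)

lemma erel_Open:
  assumes "\<And>m' th'. m' < m \<Longrightarrow> th \<subseteq>\<^sub>m th' \<Longrightarrow> erel LP m' pc t e th'" "pol_le pc (LP s)"
  shows "erel LP m pc t (Open s e) th"
  by (rule erel_pure_stepI) (auto elim!: step_OpenE intro!: erel_Opened assms)

lemma erel_Close:
  assumes "\<And>m' th'. m' < m \<Longrightarrow> th \<subseteq>\<^sub>m th' \<Longrightarrow> erel LP m' pc t e th'" "pol_le pc (LP s)"
  shows "erel LP m pc t (Close s e) th"
  by (rule erel_pure_stepI) (auto elim!: step_CloseE intro!: erel_Closed assms)

lemma erel_When:
  assumes "erel LP m pc t e1 th" "erel LP m pc t e2 th"
  shows "erel LP m pc t (When s e1 e2) th"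
  using assms
proof (induction m arbitrary: e1 e2 th rule: less_induct)
  case (less m)
  show ?case
  proof (rule erel_stepI)
    fix S th' m' e'' S' w L L'
    assume a: "th \<subseteq>\<^sub>m th'" "m' < m" "stok LP S m' th'" "step (When s e1 e2) L S e'' S' w L'"
    have later: "erel LP m' pc t e th''" if "erel LP m pc t e th" "th' \<subseteq>\<^sub>m th''" for e th''
      using erel_mono[OF that(1)] a(1,2) that(2) map_le_trans by (metis less_imp_le)
    from a(4) show "(w = Eps \<or> pol_le pc (obs_pol LP w)) \<and>
        (\<exists>th''. th' \<subseteq>\<^sub>m th'' \<and> stok LP S' m' th'' \<and> erel LP m' pc t e'' th'')"
    proof (rule step_WhenE)
      fix e1' assume e'': "e'' = When s e1' e2" and "s \<in> L" "step e1 L S e1' S' w L'"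
      with erel_stepD[OF less.prems(1) a(1-3)] obtain th'' where
        "w = Eps \<or> pol_le pc (obs_pol LP w)" "th' \<subseteq>\<^sub>m th''" "stok LP S' m' th''"
        "erel LP m' pc t e1' th''"
        by blast
      with e'' show ?thesis using less.IH[OF a(2)] later[OF less.prems(2)] by blast
    next
      fix e2' assume e'': "e'' = When s e1 e2'" and "s \<notin> L" "step e2 L S e2' S' w L'"
      with erel_stepD[OF less.prems(2) a(1-3)] obtain th'' where
        "w = Eps \<or> pol_le pc (obs_pol LP w)" "th' \<subseteq>\<^sub>m th''" "stok LP S' m' th''"
        "erel LP m' pc t e2' th''"
        by blast
      with e'' show ?thesis using less.IH[OF a(2)] later[OF less.prems(1)] by blast
    next
      assume "e'' = e1" "S' = S" "w = Eps"
      with a(3) show ?thesis using later[OF less.prems(1) map_le_refl] map_le_refl by blast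
    next
      assume "e'' = e2" "S' = S" "w = Eps"
      with a(3) show ?thesis using later[OF less.prems(2) map_le_refl] map_le_refl by blast
    qed
  qed simp
qed

section \<open>Redexes\<close>

lemma map_le_SomeD: "f \<subseteq>\<^sub>m g \<Longrightarrow> f x = Some y \<Longrightarrow> g x = Some y"
  by (metis domI map_le_def)

lemma map_le_upd_fresh: "x \<notin> dom f \<Longrightarrow> f \<subseteq>\<^sub>m f(x \<mapsto> y)"
  by (auto simp: map_le_def)

lemma stok_fresh: "stok LP S m th \<Longrightarrow> l \<notin> dom S \<Longrightarrow> l \<notin> dom th"
  unfolding stok_def by blast

lemma stok_alloc:
  assumes "stok LP S m th" "l \<notin> dom S" "vrel LP m t v (th(l \<mapsto> t))"
  shows "stok LP (S(l \<mapsto> (v, t))) m (th(l \<mapsto> t))"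
proof -
  have "th \<subseteq>\<^sub>m th(l \<mapsto> t)" using map_le_upd_fresh stok_fresh assms(1,2) .
  then show ?thesis
    using assms(1,3) vrel_mono[OF _ order_refl] unfolding stok_def by fastforce
qed

lemma stok_update:
  assumes "stok LP S m th" "th l = Some t" "vrel LP m t v th"
  shows "stok LP (S(l \<mapsto> (v, t))) m th"
  using assms unfolding stok_def by auto

lemma erel_Fst_redex:
  assumes "vrel LP m (Lab (TProd t1 t2) p) v th"
  shows "erel LP m pc t1 (Fst v) th"
proof (rule erel_pure_stepI)
  obtain v1 v2 where v: "v = Pair v1 v2" "vrel LP m t1 v1 th" using assms by auto
  fix L S e' S' w L' m' th'
  assume "step (Fst v) L S e' S' w L'" "m' < m" "th \<subseteq>\<^sub>m th'"
  moreover from this have "e' = v1 \<and> S' = S \<and> w = Eps"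
    using vrel_is_val[OF assms] v(1) by (auto elim!: step_FstE dest: step_not_val)
  ultimately show "S' = S \<and> (w = Eps \<or> pol_le pc (obs_pol LP w)) \<and> erel LP m' pc t1 e' th'"
    using vrel_mono[OF v(2)] by (simp add: erel_valI)
qed simp

lemma erel_Snd_redex:
  assumes "vrel LP m (Lab (TProd t1 t2) p) v th"
  shows "erel LP m pc t2 (Snd v) th"
proof (rule erel_pure_stepI)
  obtain v1 v2 where v: "v = Pair v1 v2" "vrel LP m t2 v2 th" using assms by auto
  fix L S e' S' w L' m' th'
  assume "step (Snd v) L S e' S' w L'" "m' < m" "th \<subseteq>\<^sub>m th'"
  moreover from this have "e' = v2 \<and> S' = S \<and> w = Eps"
    using vrel_is_val[OF assms] v(1) by (auto elim!: step_SndE dest: step_not_val)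
  ultimately show "S' = S \<and> (w = Eps \<or> pol_le pc (obs_pol LP w)) \<and> erel LP m' pc t2 e' th'"
    using vrel_mono[OF v(2)] by (simp add: erel_valI)
qed simp

lemma erel_Deref_redex:
  assumes "vrel LP m (Lab (TRef t) p) v th" "subl t t'"
  shows "erel LP m pc t' (Deref v) th"
proof (rule erel_pure_stepI)
  obtain l where l: "v = Loc l" "th l = Some t" using assms(1) by auto
  fix L S e' S' w L' m' th'
  assume st: "step (Deref v) L S e' S' w L'" and "th \<subseteq>\<^sub>m th'" "stok LP S m' th'"
  moreover have "th' l = Some t" using map_le_SomeD[OF \<open>th \<subseteq>\<^sub>m th'\<close> l(2)] .
  ultimately obtain v0 where "S l = Some (v0, t)" "vrel LP m' t v0 th'"
    unfolding stok_def by blast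
  with st have "e' = v0" "S' = S" "w = Eps"
    unfolding l(1) by (auto elim!: step_DerefE dest: step_not_val)
  with \<open>vrel LP m' t v0 th'\<close> show "S' = S \<and> (w = Eps \<or> pol_le pc (obs_pol LP w)) \<and> erel LP m' pc t' e' th'"
    by (simp add: erel_valI vrel_subl[OF _ assms(2)])
qed simp

lemma erel_New_redex:
  assumes "vrel LP m t v th" "pol_le pc (lpol t)"
  shows "erel LP m pc (Lab (TRef t) pbot) (New v t) th"
proof (rule erel_stepI)
  fix S th' m' e' S' w L L'
  assume a: "th \<subseteq>\<^sub>m th'" "m' < m" "stok LP S m' th'" "step (New v t) L S e' S' w L'"
  from a(4) obtain l where st: "l \<notin> dom S" "e' = Loc l" "S' = S(l \<mapsto> (v, t))" "w = Wr l t v"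
    by (rule step_NewE) (use vrel_is_val[OF assms(1)] in \<open>auto dest: step_not_val\<close>)
  have fresh: "th' \<subseteq>\<^sub>m th'(l \<mapsto> t)" using map_le_upd_fresh stok_fresh a(3) st(1) .
  then have "vrel LP m' t v (th'(l \<mapsto> t))"
    using vrel_mono[OF assms(1)] map_le_trans[OF a(1)] a(2) by simp
  then have "stok LP S' m' (th'(l \<mapsto> t))" using stok_alloc[OF a(3) st(1)] st(3) by simp
  moreover have "erel LP m' pc (Lab (TRef t) pbot) e' (th'(l \<mapsto> t))"
    using st(2) by (simp add: erel_valI)
  ultimately show "(w = Eps \<or> pol_le pc (obs_pol LP w)) \<and>
      (\<exists>th''. th' \<subseteq>\<^sub>m th'' \<and> stok LP S' m' th'' \<and> erel LP m' pc (Lab (TRef t) pbot) e' th'')"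
    using fresh st(4) assms(2) by auto
qed simp

lemma erel_Assign_redex:
  assumes "th l = Some t" "vrel LP m t v th" "pol_le pc (lpol t)"
  shows "erel LP m pc (Lab TUnit pbot) (Assign (Loc l) v) th"
proof (rule erel_stepI)
  fix S th' m' e' S' w L L'
  assume a: "th \<subseteq>\<^sub>m th'" "m' < m" "stok LP S m' th'" "step (Assign (Loc l) v) L S e' S' w L'"
  have l: "th' l = Some t" using map_le_SomeD[OF a(1) assms(1)] .
  from a(4) obtain u t0 where st: "e' = EUnit" "S' = S(l \<mapsto> (v, t0))" "w = Wr l t0 v" "S l = Some (u, t0)"
    by (rule step_Assign_LocE) (use vrel_is_val[OF assms(2)] in \<open>auto dest: step_not_val\<close>)
  have "t0 = t" using a(3) l st(4) unfolding stok_def by fastforce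
  moreover have "vrel LP m' t v th'" using vrel_mono[OF assms(2)] a(1,2) by simp
  ultimately have "stok LP S' m' th'" using stok_update[OF a(3) l] st(2) by simp
  moreover have "pol_le pc (obs_pol LP w)" using st(3) \<open>t0 = t\<close> assms(3) by simp
  moreover have "erel LP m' pc (Lab TUnit pbot) e' th'" using st(1) by (simp add: erel_valI)
  ultimately show "(w = Eps \<or> pol_le pc (obs_pol LP w)) \<and>
      (\<exists>th''. th' \<subseteq>\<^sub>m th'' \<and> stok LP S' m' th'' \<and> erel LP m' pc (Lab TUnit pbot) e' th'')"
    using map_le_refl by blast
qed simp

lemma erel_beta_redex:
  assumes "vrel LP m (Lab (TFun t1 L pc' t2) p) (Lam b) th" "vrel LP m t1' v th" "subl t1' t1"
    "pol_le pc pc'"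
  shows "erel LP m pc t2 (App (Lam b) v) th"
proof (rule erel_pure_stepI)
  fix L S e' S' w L' m' th'
  assume "step (App (Lam b) v) L S e' S' w L'" "m' < m" "th \<subseteq>\<^sub>m th'"
  moreover from this have "vrel LP m' t1 v th'"
    using vrel_subl[OF vrel_mono[OF assms(2)] assms(3)] by simp
  ultimately show "S' = S \<and> (w = Eps \<or> pol_le pc (obs_pol LP w)) \<and> erel LP m' pc t2 e' th'"
    using assms(1,4) vrel_is_val[OF assms(2)]
    by (auto elim!: step_App_LamE dest: step_not_val intro: erel_pc_mono)
qed simp

lemma erel_Case_redex:
  assumes "vrel LP m (Lab (TSum t1 t2) p) v th"
    and "\<And>m' th' u. m' < m \<Longrightarrow> th \<subseteq>\<^sub>m th' \<Longrightarrow> vrel LP m' t1 u th' \<Longrightarrow>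
      erel LP m' pc t (subst0 u b1) th'"
    and "\<And>m' th' u. m' < m \<Longrightarrow> th \<subseteq>\<^sub>m th' \<Longrightarrow> vrel LP m' t2 u th' \<Longrightarrow>
      erel LP m' pc t (subst0 u b2) th'"
  shows "erel LP m pc t (Case v b1 b2) th"
proof (rule erel_pure_stepI)
  fix L S e' S' w L' m' th'
  assume st: "step (Case v b1 b2) L S e' S' w L'" and m': "m' < m" and th': "th \<subseteq>\<^sub>m th'"
  from assms(1) consider (inl) u where "v = EInl u" "vrel LP m t1 u th"
    | (inr) u where "v = EInr u" "vrel LP m t2 u th"
    by auto
  then show "S' = S \<and> (w = Eps \<or> pol_le pc (obs_pol LP w)) \<and> erel LP m' pc t e' th'"
  proof cases
    case inl
    with st vrel_is_val[OF assms(1)] have "e' = subst0 u b1 \<and> S' = S \<and> w = Eps"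
      by (auto elim!: step_CaseE dest: step_not_val)
    with assms(2)[OF m' th' vrel_mono[OF inl(2) less_imp_le[OF m'] th']] show ?thesis by simp
  next
    case inr
    with st vrel_is_val[OF assms(1)] have "e' = subst0 u b2 \<and> S' = S \<and> w = Eps"
      by (auto elim!: step_CaseE dest: step_not_val)
    with assms(3)[OF m' th' vrel_mono[OF inr(2) less_imp_le[OF m'] th']] show ?thesis by simp
  qed
qed simp

section \<open>Compatibility lemmas\<close>

definition vsubst :: "('s \<Rightarrow> ('a, 's) pol) \<Rightarrow> nat \<Rightarrow> ('a, 's) tenv \<Rightarrow> (nat \<Rightarrow> ('a, 's) expr)
    \<Rightarrow> ('a, 's) senv \<Rightarrow> bool" where
  "vsubst LP m G \<sigma> th \<longleftrightarrow> (\<forall>x u. G x = Some u \<longrightarrow> vrel LP m u (\<sigma> x) th)"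

text \<open>The lock set of the typing judgement has no counterpart: the expression relation
  quantifies over all lock sets.\<close>

definition sem_typed :: "('s \<Rightarrow> ('a, 's) pol) \<Rightarrow> ('a, 's) tenv \<Rightarrow> ('a, 's) senv \<Rightarrow> ('a, 's) pol
    \<Rightarrow> ('a, 's) expr \<Rightarrow> ('a, 's) lty \<Rightarrow> bool" where
  "sem_typed LP G th pc e t \<longleftrightarrow>
     (\<forall>th' m \<sigma>. th \<subseteq>\<^sub>m th' \<longrightarrow> vsubst LP m G \<sigma> th' \<longrightarrow> erel LP m pc t (ssubst \<sigma> e) th')"

lemma vsubst_mono: "vsubst LP m G \<sigma> th \<Longrightarrow> m' \<le> m \<Longrightarrow> th \<subseteq>\<^sub>m th' \<Longrightarrow> vsubst LP m' G \<sigma> th'"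
  unfolding vsubst_def using vrel_mono by blast

lemma vsubst_cons:
  "vsubst LP m G \<sigma> th \<Longrightarrow> vrel LP m t v th \<Longrightarrow> vsubst LP m (case_nat (Some t) G) (case_nat v \<sigma>) th"
  unfolding vsubst_def by (auto split: nat.split)

lemma vsubst_venv:
  "venv LP m G \<delta> th \<Longrightarrow> vsubst LP m G (\<lambda>i. case \<delta> i of Some v \<Rightarrow> v | None \<Rightarrow> Var i) th"
  unfolding venv_def vsubst_def by fastforce

lemma sem_typedI:
  "(\<And>th' m \<sigma>. th \<subseteq>\<^sub>m th' \<Longrightarrow> vsubst LP m G \<sigma> th' \<Longrightarrow> erel LP m pc t (ssubst \<sigma> e) th') \<Longrightarrow>
   sem_typed LP G th pc e t"
  unfolding sem_typed_def by blast

lemma sem_typedD: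
  assumes "sem_typed LP G th pc e t" "th \<subseteq>\<^sub>m th'" "vsubst LP m G \<sigma> th'"
    "th' \<subseteq>\<^sub>m th''" "m' \<le> m"
  shows "erel LP m' pc t (ssubst \<sigma> e) th''"
  using assms map_le_trans vsubst_mono unfolding sem_typed_def by metis

lemma sem_typed_Var: "G x = Some t \<Longrightarrow> sem_typed LP G th pc (Var x) t"
  by (rule sem_typedI) (simp add: vsubst_def erel_valI)

lemma sem_typed_Unit: "sem_typed LP G th pc EUnit (Lab TUnit pbot)"
  by (rule sem_typedI) (simp add: erel_valI)

lemma sem_typed_Num: "sem_typed LP G th pc (ENum n) (Lab TNat pbot)"
  by (rule sem_typedI) (simp add: erel_valI)

lemma sem_typed_Loc: "th l = Some t \<Longrightarrow> sem_typed LP G th pc (Loc l) (Lab (TRef t) pbot)"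
  by (rule sem_typedI) (simp add: erel_valI map_le_SomeD)

lemma sem_typed_Lam:
  assumes "sem_typed LP (case_nat (Some t1) G) th pc' e t2"
  shows "sem_typed LP G th pc (Lam e) (Lab (TFun t1 L pc' t2) pbot)"
proof (rule sem_typedI)
  fix th' m \<sigma> assume th': "th \<subseteq>\<^sub>m th'" and \<sigma>: "vsubst LP m G \<sigma> th'"
  have "erel LP m' pc' t2 (subst0 v (ssubst (up \<sigma>) e)) th''"
    if "th' \<subseteq>\<^sub>m th''" "m' < m" "vrel LP m' t1 v th''" for th'' m' v
    unfolding subst0_ssubst_up
    using sem_typedD[OF assms map_le_trans[OF th' that(1)] vsubst_cons[OF vsubst_mono[OF \<sigma>] that(3)]]
      that(1,2) by simp
  then show "erel LP m pc (Lab (TFun t1 L pc' t2) pbot) (ssubst \<sigma> (Lam e)) th'"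
    by (simp add: erel_valI)
qed

lemma sem_typed_Open:
  "sem_typed LP G th pc e t \<Longrightarrow> pol_le pc (LP s) \<Longrightarrow> sem_typed LP G th pc (Open s e) t"
  by (rule sem_typedI) (auto intro!: erel_Open elim: sem_typedD)

lemma sem_typed_Close:
  "sem_typed LP G th pc e t \<Longrightarrow> pol_le pc (LP s) \<Longrightarrow> sem_typed LP G th pc (Close s e) t"
  by (rule sem_typedI) (auto intro!: erel_Close elim: sem_typedD)

lemma sem_typed_Opened:
  "sem_typed LP G th pc e t \<Longrightarrow> pol_le pc (LP s) \<Longrightarrow> sem_typed LP G th pc (Opened s e) t"
  by (rule sem_typedI) (auto intro!: erel_Opened elim: sem_typedD)

lemma sem_typed_Closed:
  "sem_typed LP G th pc e t \<Longrightarrow> pol_le pc (LP s) \<Longrightarrow> sem_typed LP G th pc (Closed s e) t"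
  by (rule sem_typedI) (auto intro!: erel_Closed elim: sem_typedD)

lemma sem_typed_sub:
  "sem_typed LP G th pc' e t' \<Longrightarrow> pol_le pc pc' \<Longrightarrow> subl t' t \<Longrightarrow> sem_typed LP G th pc e t"
  unfolding sem_typed_def using erel_subl by blast

lemma sem_typed_eval_ctx:
  assumes "sem_typed LP G th pc e t1" "eval_ctx K" "\<And>\<sigma>. ssubst \<sigma> (K e) = K (ssubst \<sigma> e)"
    and "\<And>th' m v. th \<subseteq>\<^sub>m th' \<Longrightarrow> vrel LP m t1 v th' \<Longrightarrow> erel LP m pc t (K v) th'"
  shows "sem_typed LP G th pc (K e) t"
proof (rule sem_typedI)
  fix th' m \<sigma> assume th': "th \<subseteq>\<^sub>m th'" and "vsubst LP m G \<sigma> th'"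
  from sem_typedD[OF assms(1) this map_le_refl order_refl]
  show "erel LP m pc t (ssubst \<sigma> (K e)) th'"
    unfolding assms(3) by (rule erel_bind[OF assms(2)]) (metis assms(4) map_le_trans th')
qed

lemma sem_typed_Fst:
  "sem_typed LP G th pc e (Lab (TProd t1 t2) p) \<Longrightarrow> sem_typed LP G th pc (Fst e) t1"
  by (erule sem_typed_eval_ctx[OF _ eval_ctx_Fst]) (simp_all add: erel_Fst_redex)

lemma sem_typed_Snd:
  "sem_typed LP G th pc e (Lab (TProd t1 t2) p) \<Longrightarrow> sem_typed LP G th pc (Snd e) t2"
  by (erule sem_typed_eval_ctx[OF _ eval_ctx_Snd]) (simp_all add: erel_Snd_redex)

lemma sem_typed_Inl:
  "sem_typed LP G th pc e t1 \<Longrightarrow> sem_typed LP G th pc (EInl e) (Lab (TSum t1 t2) pbot)"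
  by (erule sem_typed_eval_ctx[OF _ eval_ctx_Inl]) (simp_all add: erel_valI)

lemma sem_typed_Inr:
  "sem_typed LP G th pc e t2 \<Longrightarrow> sem_typed LP G th pc (EInr e) (Lab (TSum t1 t2) pbot)"
  by (erule sem_typed_eval_ctx[OF _ eval_ctx_Inr]) (simp_all add: erel_valI)

lemma sem_typed_Deref:
  "sem_typed LP G th pc e (Lab (TRef t) p) \<Longrightarrow> subl t t' \<Longrightarrow> sem_typed LP G th pc (Deref e) t'"
  by (erule sem_typed_eval_ctx[OF _ eval_ctx_Deref]) (simp_all add: erel_Deref_redex)

lemma sem_typed_New:
  "sem_typed LP G th pc e t' \<Longrightarrow> pol_le pc (lpol t) \<Longrightarrow> subl (lspec t' L) t \<Longrightarrow>
   sem_typed LP G th pc (New e t) (Lab (TRef t) pbot)"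
  by (erule sem_typed_eval_ctx[OF _ eval_ctx_New]) (simp, metis erel_New_redex vrel_lspec vrel_subl)

lemma sem_typed_eval_ctx2:
  fixes C :: "('a, 's) expr \<Rightarrow> ('a, 's) expr \<Rightarrow> ('a, 's) expr"
  assumes "sem_typed LP G th pc e1 t1" "sem_typed LP G th pc e2 t2"
    and "\<And>e2. eval_ctx (\<lambda>x. C x e2)" "\<And>m v th. vrel LP m t1 v th \<Longrightarrow> eval_ctx (C v)"
    and "\<And>\<sigma>. ssubst \<sigma> (C e1 e2) = C (ssubst \<sigma> e1) (ssubst \<sigma> e2)"
    and "\<And>th1 th2 m1 m2 v1 v2. th \<subseteq>\<^sub>m th1 \<Longrightarrow> th1 \<subseteq>\<^sub>m th2 \<Longrightarrow> m2 \<le> m1 \<Longrightarrow>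
      vrel LP m1 t1 v1 th1 \<Longrightarrow> vrel LP m2 t2 v2 th2 \<Longrightarrow> erel LP m2 pc t (C v1 v2) th2"
  shows "sem_typed LP G th pc (C e1 e2) t"
proof (rule sem_typedI)
  fix th' m \<sigma> assume th': "th \<subseteq>\<^sub>m th'" and \<sigma>: "vsubst LP m G \<sigma> th'"
  show "erel LP m pc t (ssubst \<sigma> (C e1 e2)) th'"
    unfolding assms(5)
  proof (rule erel_bind[OF assms(3) sem_typedD[OF assms(1) th' \<sigma> map_le_refl order_refl]])
    fix th1 m1 v1 assume v1: "th' \<subseteq>\<^sub>m th1" "m1 \<le> m" "vrel LP m1 t1 v1 th1"
    show "erel LP m1 pc t (C v1 (ssubst \<sigma> e2)) th1"
      by (rule erel_bind[OF assms(4)[OF v1(3)] sem_typedD[OF assms(2) th' \<sigma> v1(1,2)]])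
        (use assms(6) map_le_trans[OF th' v1(1)] v1(3) in blast)
  qed
qed

lemma sem_typed_Pair:
  assumes "sem_typed LP G th pc e1 t1" "sem_typed LP G th pc e2 t2"
  shows "sem_typed LP G th pc (Pair e1 e2) (Lab (TProd t1 t2) pbot)"
  using assms eval_ctx_Pair1 eval_ctx_Pair2[OF vrel_is_val]
  by (rule sem_typed_eval_ctx2) (simp_all add: erel_valI vrel_mono)

lemma sem_typed_App:
  assumes "sem_typed LP G th pc e1 (Lab (TFun t1 L pc' t2) p)" "sem_typed LP G th pc e2 t1'"
    "subl t1' t1" "pol_le pc pc'"
  shows "sem_typed LP G th pc (App e1 e2) t2"
  using assms(1,2) eval_ctx_App1
proof (rule sem_typed_eval_ctx2)
  show "eval_ctx (App f)" if "vrel LP m (Lab (TFun t1 L pc' t2) p) f th" for m f th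
    using that eval_ctx_App2 by auto
  show "erel LP m2 pc t2 (App f v) th2"
    if a: "th1 \<subseteq>\<^sub>m th2" "m2 \<le> m1" "vrel LP m1 (Lab (TFun t1 L pc' t2) p) f th1"
      "vrel LP m2 t1' v th2"
    for th1 th2 m1 m2 f v
  proof -
    obtain b where "f = Lam b" using a(3) by auto
    with vrel_mono[OF a(3,2,1)] show ?thesis
      using erel_beta_redex[OF _ a(4) assms(3,4)] by simp
  qed
qed simp

lemma sem_typed_Assign:
  assumes "sem_typed LP G th pc e1 (Lab (TRef t') p)" "sem_typed LP G th pc e2 t"
    "subl (lspec t L) t'" "pol_le pc (lpol t')"
  shows "sem_typed LP G th pc (Assign e1 e2) (Lab TUnit pbot)"
  using assms(1,2) eval_ctx_Assign1
proof (rule sem_typed_eval_ctx2)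
  show "eval_ctx (Assign r)" if "vrel LP m (Lab (TRef t') p) r th" for m r th
    using that eval_ctx_Assign2 by auto
  show "erel LP m2 pc (Lab TUnit pbot) (Assign r v) th2"
    if a: "th1 \<subseteq>\<^sub>m th2" "m2 \<le> m1" "vrel LP m1 (Lab (TRef t') p) r th1" "vrel LP m2 t v th2"
    for th1 th2 m1 m2 r v
  proof -
    obtain l where "r = Loc l" "th2 l = Some t'" using a(3) map_le_SomeD[OF a(1)] by auto
    moreover have "vrel LP m2 t' v th2" using vrel_subl[of LP m2 "lspec t L"] a(4) assms(3) by simp
    ultimately show ?thesis using erel_Assign_redex assms(4) by simp
  qed
qed simp

lemma sem_typed_Case:
  assumes "sem_typed LP G th pc e (Lab (TSum t1 t2) p)"
    and "sem_typed LP (case_nat (Some t1) G) th pc e1 t"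
    and "sem_typed LP (case_nat (Some t2) G) th pc e2 t"
  shows "sem_typed LP G th pc (Case e e1 e2) t"
proof (rule sem_typedI)
  fix th' m \<sigma> assume th': "th \<subseteq>\<^sub>m th'" and \<sigma>: "vsubst LP m G \<sigma> th'"
  show "erel LP m pc t (ssubst \<sigma> (Case e e1 e2)) th'"
    unfolding ssubst.simps
  proof (rule erel_bind[OF eval_ctx_Case sem_typedD[OF assms(1) th' \<sigma> map_le_refl order_refl]])
    fix th1 m1 v assume v: "th' \<subseteq>\<^sub>m th1" "m1 \<le> m" "vrel LP m1 (Lab (TSum t1 t2) p) v th1"
    have branch: "erel LP m2 pc t (subst0 u (ssubst (up \<sigma>) b)) th2"
      if "sem_typed LP (case_nat (Some tb) G) th pc b t" "m2 < m1" "th1 \<subseteq>\<^sub>m th2"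
        "vrel LP m2 tb u th2"
      for tb b m2 th2 u
    proof -
      have "m2 \<le> m" "th' \<subseteq>\<^sub>m th2" using that(2,3) v(1,2) map_le_trans by auto
      with \<sigma> have "vsubst LP m2 G \<sigma> th2" by (rule vsubst_mono)
      then have "vsubst LP m2 (case_nat (Some tb) G) (case_nat u \<sigma>) th2"
        using that(4) by (rule vsubst_cons)
      from sem_typedD[OF that(1) map_le_trans[OF th' \<open>th' \<subseteq>\<^sub>m th2\<close>] this map_le_refl order_refl]
      show ?thesis by (simp add: subst0_ssubst_up)
    qed
    show "erel LP m1 pc t (Case v (ssubst (up \<sigma>) e1) (ssubst (up \<sigma>) e2)) th1"
      using v(3) branch[OF assms(2)] branch[OF assms(3)] by (rule erel_Case_redex)
  qed
qed

lemma sem_typed_When: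
  "sem_typed LP G th pc e1 t \<Longrightarrow> sem_typed LP G th pc e2 t \<Longrightarrow> sem_typed LP G th pc (When s e1 e2) t"
  by (rule sem_typedI) (auto intro!: erel_When elim: sem_typedD)

theorem typing_sem_typed: "typing LP G L th pc e t \<Longrightarrow> sem_typed LP G th pc e t"
proof (induction rule: typing.induct)
  case t_case
  then show ?case
    by (intro sem_typed_Case) (auto elim: sem_typed_sub intro: pol_le_pjoin subl_refl)
next
  case t_app
  then show ?case by (intro sem_typed_App) (auto intro: pol_le_trans[OF pol_le_pjoin])
next
  case t_assign
  then show ?case by (intro sem_typed_Assign) (auto intro: pol_le_trans[OF pol_le_pjoin])
next
  case t_when
  then show ?case
    by (intro sem_typed_When) (auto elim: sem_typed_sub intro: pol_le_pjoin subl_refl)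
qed (blast intro: sem_typed_Var sem_typed_Unit sem_typed_Num sem_typed_Loc sem_typed_Lam
  sem_typed_Open sem_typed_Opened sem_typed_Close sem_typed_Closed sem_typed_Pair sem_typed_Fst
  sem_typed_Snd sem_typed_Inl sem_typed_Inr sem_typed_sub sem_typed_Deref sem_typed_New)+

theorem mainTheorem3:
  fixes LP :: "'s \<Rightarrow> ('a, 's) pol"
  assumes "typing LP G L th pc e t"
    and "th \<subseteq>\<^sub>m th'"
    and "venv LP m G \<delta> th'"
  shows "erel LP m pc t (apply_env \<delta> e) th'"
  using typing_sem_typed[OF assms(1)] assms(2) vsubst_venv[OF assms(3)]
  unfolding apply_env_def sem_typed_def by blast

end
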